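(* $\mathbb{R}_{\mathcal{E}^2}\subsetneq\mathbb{R}_{\mathcal{E}^3}$; that is, every $\mathcal{E}^2$-computable real is $\mathcal{E}^3$-computable, and there exists a real number $\alpha$ that is $\mathcal{E}^3$-computable but not $\mathcal{E}^2$-computable.
   Context: $\mathbb{N}=\{0,1,2,\dots\}$. Initial functions: $Z(x)=0$, $S(x)=x+1$, projections $P^n_i(x_1,\dots,x_n)=x_i$. Define $f_0(x,y)=x+1$, $f_1(x,y)=x+y$, $f_2(x,y)=xy$, and for $n\ge2$: $f_{n+1}(x,0)=1$, $f_{n+1}(x,y+1)=f_n(x,f_{n+1}(x,y))$. A function $f$ is obtained by primitive recursion from $g:\mathbb{N}^{m-1}\to\mathbb{N}$, $h:\mathbb{N}^{m+1}\to\mathbb{N}$ if $f(0,\bar x)=g(\bar x)$ and $f(x+1,\bar x)=h(x,f(x,\bar x),\bar x)$; it is obtained by bounded primitive recursion from $g,h,j$ if moreover $f(x,\bar x)\le j(x,\bar x)$ for all arguments. The Grzegorczyk class $\mathcal{E}^n$ is the smallest set of functions containing the initial functions and $f_n$ and closed under composition and bounded primitive recursion (with $g,h,j$ in the class). For a class $\mathcal{F}$ of functions $\mathbb{N}^k\to\mathbb{N}$, an $\mathcal{F}$-sequence is $A(x)=\frac{f(x)-g(x)}{h(x)+1}$ with $f,g,h:\mathbb{N}\to\mathbb{N}$ in $\mathcal{F}$, and $\alpha\in\mathbb{R}$ is $\mathcal{F}$-computable if some $\mathcal{F}$-sequence $A$ satisfies $|A(x)-\alpha|\le\frac1{x+1}$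 for all $x$; $\mathbb{R}_{\mathcal{F}}$ denotes the set of $\mathcal{F}$-computable reals. *)

theory Defs
  imports Complex_Main
begin

fun grz_f :: "nat \<Rightarrow> nat \<Rightarrow> nat \<Rightarrow> nat" where
  "grz_f 0 x y = x + 1"
| "grz_f (Suc 0) x y = x + y"
| "grz_f (Suc (Suc 0)) x y = x * y"
| "grz_f (Suc (Suc (Suc n))) x 0 = 1"
| "grz_f (Suc (Suc (Suc n))) x (Suc y) =
     grz_f (Suc (Suc n)) x (grz_f (Suc (Suc (Suc n))) x y)"

text \<open>A k-ary function N^k \<rightarrow> N is represented by a pair (k, F) with
  F :: nat list \<Rightarrow> nat, only its values on lists of length k being relevant.
  grz n is the Grzegorczyk class E^n.\<close>
inductive_set grz :: "nat \<Rightarrow> (nat \<times> (nat list \<Rightarrow> nat)) set" for n :: nat where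
  zero: "(1, \<lambda>xs. 0) \<in> grz n"
| succ: "(1, \<lambda>xs. xs ! 0 + 1) \<in> grz n"
| proj: "i < k \<Longrightarrow> (k, \<lambda>xs. xs ! i) \<in> grz n"
| fn:   "(2, \<lambda>xs. grz_f n (xs ! 0) (xs ! 1)) \<in> grz n"
| comp: "(m, h) \<in> grz n \<Longrightarrow> (\<forall>i<m. (k, gs i) \<in> grz n) \<Longrightarrow>
          (k, \<lambda>xs. h (map (\<lambda>i. gs i xs) [0..<m])) \<in> grz n"
| bprec: "(k, g) \<in> grz n \<Longrightarrow> (k + 2, h) \<in> grz n \<Longrightarrow> (k + 1, j) \<in> grz n \<Longrightarrow>
          (\<forall>x xs. length xs = k \<longrightarrow>
             rec_nat (g xs) (\<lambda>y r. h (y # r # xs)) x \<le> j (x # xs)) \<Longrightarrow>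
          (k + 1, \<lambda>ys. rec_nat (g (tl ys)) (\<lambda>y r. h (y # r # tl ys)) (hd ys)) \<in> grz n"
| ext:  "(k, f) \<in> grz n \<Longrightarrow> (\<forall>xs. length xs = k \<longrightarrow> g xs = f xs) \<Longrightarrow> (k, g) \<in> grz n"

definition grz_unary :: "nat \<Rightarrow> (nat \<Rightarrow> nat) \<Rightarrow> bool" where
  "grz_unary n f \<longleftrightarrow> (1, \<lambda>xs. f (xs ! 0)) \<in> grz n"

definition grz_computable :: "nat \<Rightarrow> real \<Rightarrow> bool" where
  "grz_computable n \<alpha> \<longleftrightarrow>
     (\<exists>f g h. grz_unary n f \<and> grz_unary n g \<and> grz_unary n h \<and>
        (\<forall>x. \<bar>(real (f x) - real (g x)) / (real (h x) + 1) - \<alpha>\<bar> \<le> 1 / (real x + 1)))"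

definition grz_reals :: "nat \<Rightarrow> real set" where
  "grz_reals n = {\<alpha>. grz_computable n \<alpha>}"

end

(*
  Every E^2 function is computed by a term built from zero, successor, projections,
  multiplication, composition and recursion, and all values arising in that computation are
  bounded by a polynomial in the largest argument.  Evaluating terms with every value clamped at
  a bound D therefore gives the true values once D exceeds that polynomial.  With exponentiation
  available, a single E^3 function collects the clamped values of all terms with code below N,
  on all argument lists with entries at most D, into one number written in base D + 1; it is
  obtained by iterating a table update as often as the depth of the terms.

  The i-th base-4 digit of the diagonal real is 0 or 2: the index i names a candidate triple of
  terms (f, g, h) and a polynomial exponent, the table supplies f x, g x, h x at x = 4^(i+2), and
  the digit is chosen so that the real stays further than 1 / (x + 1) from (f x - g x) / (h x + 1).
  The digits, hence the real, are E^3-computable, but no E^2 sequence approximates it.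
*)

theory Submission
  imports Defs "HOL-Library.More_List"
begin

section \<open>Closure properties of the Grzegorczyk classes\<close>

lemma grz_compose:
  assumes "(m, h) \<in> grz n" "length gs = m" "\<forall>g\<in>set gs. (k, g) \<in> grz n"
  shows "(k, \<lambda>xs. h (map (\<lambda>g. g xs) gs)) \<in> grz n"
proof -
  have "(k, \<lambda>xs. h (map (\<lambda>i. (gs ! i) xs) [0..<m])) \<in> grz n"
    using assms by (intro grz.comp) auto
  moreover have "map (\<lambda>i. (gs ! i) xs) [0..<m] = map (\<lambda>g. g xs) gs" for xs
    using assms(2) by (intro nth_equalityI) auto
  ultimately show ?thesis by simp
qed

lemma grz_cong: "(k, f) \<in> grz n \<Longrightarrow> (\<And>xs. length xs = k \<Longrightarrow> g xs = f xs) \<Longrightarrow> (k, g) \<in> grz n"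
  using grz.ext by blast

lemma grz_subst_head:
  assumes "(k + 1, f) \<in> grz n" "(k, a) \<in> grz n"
  shows "(k, \<lambda>xs. f (a xs # xs)) \<in> grz n"
proof -
  have map_proj: "map (\<lambda>i. xs ! i) [0..<k] = xs" if "length xs = k" for xs :: "nat list"
    using map_nth[of xs] that by simp
  have "(k, \<lambda>xs. f (map (\<lambda>g. g xs) (a # map (\<lambda>i xs. xs ! i) [0..<k]))) \<in> grz n"
    using assms by (intro grz_compose) (auto intro: grz.proj)
  then show ?thesis
    by (rule grz_cong) (simp add: comp_def map_proj)
qed

lemma grz_drop:
  assumes "(k, f) \<in> grz n"
  shows "(k + d, \<lambda>zs. f (drop d zs)) \<in> grz n"
proof -
  have drop_eq: "map (\<lambda>i. zs ! (i + d)) [0..<k] = drop d zs" if "length zs = k + d" for zs :: "nat list"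
    using that by (intro nth_equalityI) (auto simp: add.commute)
  have "(k + d, \<lambda>zs. f (map (\<lambda>g. g zs) (map (\<lambda>i zs. zs ! (i + d)) [0..<k]))) \<in> grz n"
    using assms by (intro grz_compose) (auto intro: grz.proj)
  then show ?thesis
    by (rule grz_cong) (simp add: comp_def drop_eq)
qed

lemma grz_const_zero:
  assumes "0 < k"
  shows "(k, \<lambda>xs. 0) \<in> grz n"
proof -
  have "(k, \<lambda>xs. (\<lambda>xs. 0::nat) (map (\<lambda>g. g xs) [\<lambda>xs. xs ! 0])) \<in> grz n"
    by (rule grz_compose[OF grz.zero, of "[\<lambda>xs. xs ! 0]"]) (use assms grz.proj in auto)
  then show ?thesis by simp
qed

lemma grz_pred: "(1, \<lambda>xs. xs ! 0 - 1) \<in> grz n"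
proof -
  have rec_pred: "rec_nat 0 (\<lambda>y r. y) x = x - 1" for x :: nat
    by (cases x) auto
  have "(1 + 1, \<lambda>ys. rec_nat ((\<lambda>xs. 0) (tl ys)) (\<lambda>y r. (\<lambda>zs. zs ! 0) (y # r # tl ys)) (hd ys))
          \<in> grz n"
    by (rule grz.bprec[OF grz.zero grz.proj grz.proj]) (auto simp: rec_pred)
  then have "(2, \<lambda>ys. rec_nat 0 (\<lambda>y r. y) (hd ys)) \<in> grz n"
    by (simp add: numeral_2_eq_2)
  then have "(1, \<lambda>xs. (\<lambda>ys. rec_nat 0 (\<lambda>y r. y) (hd ys)) (map (\<lambda>g. g xs) [\<lambda>xs. xs ! 0, \<lambda>xs. xs ! 0]))
      \<in> grz n"
    by (rule grz_compose) (auto intro: grz.proj)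
  then show ?thesis by (simp add: rec_pred)
qed

lemma grz_diff: "(2, \<lambda>xs. xs ! 0 - xs ! 1) \<in> grz n"
proof -
  have rec_diff: "rec_nat a (\<lambda>y r. r - Suc 0) y = a - y" for a y :: nat
    by (induction y) auto
  have "(3, \<lambda>xs. (\<lambda>xs. xs ! 0 - 1) (map (\<lambda>g. g xs) [\<lambda>zs. zs ! 1])) \<in> grz n"
    by (rule grz_compose[OF grz_pred]) (auto intro: grz.proj)
  then have h: "(3, \<lambda>zs. zs ! 1 - 1) \<in> grz n" by simp
  have "(1 + 1, \<lambda>ys. rec_nat ((\<lambda>xs. xs ! 0) (tl ys)) (\<lambda>y r. (\<lambda>zs. zs ! 1 - 1) (y # r # tl ys))
          (hd ys)) \<in> grz n"
  proof (rule grz.bprec)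
    show "(1 + 2, \<lambda>zs. zs ! 1 - 1) \<in> grz n" using h by (simp add: numeral_3_eq_3)
    show "(1 + 1, \<lambda>zs. zs ! 1) \<in> grz n" by (rule grz.proj) simp
  qed (auto intro: grz.proj simp: rec_diff)
  then have "(2, \<lambda>ys. rec_nat (tl ys ! 0) (\<lambda>y r. r - 1) (hd ys)) \<in> grz n"
    by (simp add: numeral_2_eq_2)
  then have "(2, \<lambda>xs. (\<lambda>ys. rec_nat (tl ys ! 0) (\<lambda>y r. r - 1) (hd ys))
      (map (\<lambda>g. g xs) [\<lambda>xs. xs ! 1, \<lambda>xs. xs ! 0])) \<in> grz n"
    by (rule grz_compose) (auto intro: grz.proj)
  then show ?thesis
    by (rule grz_cong) (simp add: rec_diff)
qed

lemma grz_min: "(2, \<lambda>xs. min (xs ! 0) (xs ! 1)) \<in> grz n"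
proof -
  have "(2, \<lambda>xs. (\<lambda>xs. xs ! 0 - xs ! 1) (map (\<lambda>g. g xs) [\<lambda>xs. xs ! 0, \<lambda>xs. xs ! 0 - xs ! 1]))
      \<in> grz n"
    by (rule grz_compose[OF grz_diff]) (use grz_diff in \<open>auto intro: grz.proj\<close>)
  then have "(2, \<lambda>xs. xs ! 0 - (xs ! 0 - xs ! 1)) \<in> grz n" by simp
  then show ?thesis
    by (rule grz_cong) auto
qed

lemma grz_f_3_eq_power: "grz_f 3 x y = x ^ y"
  by (induction y) (auto simp: numeral_3_eq_3)

lemma grz3_power: "(2, \<lambda>xs. xs ! 0 ^ xs ! 1) \<in> grz 3"
  using grz.fn[of 3] by (simp add: grz_f_3_eq_power)

section \<open>Clamped expressions\<close>

text \<open>Recursion \<open>ERec n g h c\<close> clamps every value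
  at \<open>c\<close>, so that each expression denotes an \<open>\<E>\<^sup>3\<close> function without side conditions;
  by \<open>eval_ERec\<close> the clamping is invisible whenever \<open>c\<close> bounds the recursion.\<close>

datatype expr = EVar nat | EZero | ESuc expr | EPow expr expr | ERec expr expr expr expr
  | ELet expr expr

fun eval_expr :: "expr \<Rightarrow> nat list \<Rightarrow> nat" where
  "eval_expr (EVar i) env = nth_default 0 env i"
| "eval_expr EZero env = 0"
| "eval_expr (ESuc e) env = Suc (eval_expr e env)"
| "eval_expr (EPow a b) env = eval_expr a env ^ eval_expr b env"
| "eval_expr (ERec n g h c) env = rec_nat (min (eval_expr c env) (eval_expr g env))
      (\<lambda>y r. min (eval_expr c env) (eval_expr h (y # r # env))) (eval_expr n env)"
| "eval_expr (ELet a b) env = eval_expr b (eval_expr a env # env)"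

lemma grz_clamped_rec:
  assumes "(k, g) \<in> grz n" "(k + 2, h) \<in> grz n" "(k, c) \<in> grz n"
  shows "(k + 1, \<lambda>ys. rec_nat (min (c (tl ys)) (g (tl ys)))
            (\<lambda>y r. min (c (tl ys)) (h (y # r # tl ys))) (hd ys)) \<in> grz n"
proof -
  have clamp_le: "rec_nat (min c0 a) (\<lambda>y r. min c0 (f y r)) x \<le> c0" for c0 a x :: nat and f
    by (cases x) auto
  have "(k, \<lambda>xs. (\<lambda>xs. min (xs ! 0) (xs ! 1)) (map (\<lambda>f. f xs) [c, g])) \<in> grz n"
    by (rule grz_compose[OF grz_min]) (use assms in auto)
  moreover have "(k + 2, \<lambda>zs. (\<lambda>xs. min (xs ! 0) (xs ! 1)) (map (\<lambda>f. f zs) [\<lambda>zs. c (drop 2 zs), h]))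
      \<in> grz n"
    by (rule grz_compose[OF grz_min]) (use assms grz_drop[OF assms(3), of 2] in auto)
  moreover have "(k + 1, \<lambda>zs. c (drop 1 zs)) \<in> grz n"
    using grz_drop[OF assms(3), of 1] .
  ultimately have "(k + 1, \<lambda>ys. rec_nat ((\<lambda>xs. min (c xs) (g xs)) (tl ys))
      (\<lambda>y r. (\<lambda>zs. min (c (drop 2 zs)) (h zs)) (y # r # tl ys)) (hd ys)) \<in> grz n"
    by (intro grz.bprec) (auto simp: clamp_le)
  then show ?thesis by simp
qed

lemma grz3_eval_expr: "0 < k \<Longrightarrow> (k, eval_expr e) \<in> grz 3"
proof (induction e arbitrary: k)
  case (EVar i)
  show ?case
  proof (cases "i < k")
    case True
    show ?thesis by (rule grz_cong[OF grz.proj[OF True]]) (use True in \<open>simp add: nth_default_nth\<close>)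
  next
    case False
    show ?thesis by (rule grz_cong[OF grz_const_zero[OF EVar]]) (use False in \<open>simp add: nth_default_beyond\<close>)
  qed
next
  case EZero
  then show ?case using grz_const_zero by simp
next
  case (ESuc e)
  have "(k, \<lambda>xs. (\<lambda>xs. xs ! 0 + 1) (map (\<lambda>g. g xs) [eval_expr e])) \<in> grz 3"
    by (rule grz_compose[OF grz.succ]) (use ESuc in auto)
  then show ?case by simp
next
  case (EPow a b)
  have "(k, \<lambda>xs. (\<lambda>xs. xs ! 0 ^ xs ! 1) (map (\<lambda>g. g xs) [eval_expr a, eval_expr b])) \<in> grz 3"
    by (rule grz_compose[OF grz3_power]) (use EPow in auto)
  then show ?case by simp
next
  case (ELet a b)
  then show ?case using grz_subst_head[of k "eval_expr b" 3 "eval_expr a"] by simp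
next
  case (ERec m g h c)
  then show ?case
    using grz_subst_head[OF grz_clamped_rec[of k "eval_expr g" 3 "eval_expr h" "eval_expr c"]]
    by simp
qed

fun shift :: "nat \<Rightarrow> nat \<Rightarrow> expr \<Rightarrow> expr" where
  "shift k d (EVar i) = (if i < k then EVar i else EVar (i + d))"
| "shift k d EZero = EZero"
| "shift k d (ESuc e) = ESuc (shift k d e)"
| "shift k d (EPow a b) = EPow (shift k d a) (shift k d b)"
| "shift k d (ERec n g h c) = ERec (shift k d n) (shift k d g) (shift (k + 2) d h) (shift k d c)"
| "shift k d (ELet a b) = ELet (shift k d a) (shift (k + 1) d b)"

lemma eval_shift:
  "k \<le> length env \<Longrightarrow> length ys = d \<Longrightarrow>
   eval_expr (shift k d e) (take k env @ ys @ drop k env) = eval_expr e env"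
proof (induction e arbitrary: k env)
  case (EVar i)
  then show ?case by (auto simp: nth_default_def nth_append min_def)
next
  case (ERec n g h c)
  have "eval_expr (shift (k + 2) d h) (y # r # take k env @ ys @ drop k env) = eval_expr h (y # r # env)"
    for y r
    using ERec.IH(3)[of "k + 2" "y # r # env"] ERec.prems by simp
  with ERec show ?case by simp
next
  case (ELet a b)
  have "eval_expr (shift (k + 1) d b) (v # take k env @ ys @ drop k env) = eval_expr b (v # env)" for v
    using ELet.IH(2)[of "k + 1" "v # env"] ELet.prems by simp
  with ELet show ?case by simp
qed auto

abbreviation lift :: "nat \<Rightarrow> expr \<Rightarrow> expr" where
  "lift \<equiv> shift 0"

text \<open>The simplifier presents \<open>lift 1\<close> and \<open>shift 1 1\<close> with \<open>Suc 0\<close>, hence that form below.\<close>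

lemma eval_lift1 [simp]: "eval_expr (lift (Suc 0) e) (a # env) = eval_expr e env"
  using eval_shift[of 0 env "[a]" 1 e] by simp

lemma eval_lift2 [simp]: "eval_expr (lift 2 e) (a # b # env) = eval_expr e env"
  using eval_shift[of 0 env "[a, b]" 2 e] by simp

lemma eval_shift_1_1 [simp]:
  "eval_expr (shift (Suc 0) (Suc 0) e) (a # b # env) = eval_expr e (a # env)"
  using eval_shift[of 1 "a # env" "[b]" 1 e] by simp

declare eval_expr.simps(5) [simp del]

lemma rec_nat_cong_upto:
  assumes "\<And>y. y < x \<Longrightarrow> G y (rec_nat a H y) = H y (rec_nat a H y)"
  shows "rec_nat a G x = rec_nat a H x"
proof -
  have "rec_nat a G y = rec_nat a H y" if "y \<le> x" for y
    using that assms by (induction y) auto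
  then show ?thesis by simp
qed

lemma eval_ERec:
  assumes "\<forall>y\<le>eval_expr n env. rec_nat (eval_expr g env) (\<lambda>y r. eval_expr h (y # r # env)) y
             \<le> eval_expr c env"
  shows "eval_expr (ERec n g h c) env
           = rec_nat (eval_expr g env) (\<lambda>y r. eval_expr h (y # r # env)) (eval_expr n env)"
proof -
  let ?R = "rec_nat (eval_expr g env) (\<lambda>y r. eval_expr h (y # r # env))"
  have "?R 0 \<le> eval_expr c env" using assms by blast
  then have "min (eval_expr c env) (eval_expr g env) = eval_expr g env" by simp
  moreover have "rec_nat (eval_expr g env) (\<lambda>y r. min (eval_expr c env) (eval_expr h (y # r # env)))
      (eval_expr n env) = ?R (eval_expr n env)"
  proof (rule rec_nat_cong_upto)
    fix y assume "y < eval_expr n env"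
    then have "?R (Suc y) \<le> eval_expr c env" using assms Suc_leI by blast
    then show "min (eval_expr c env) (eval_expr h (y # ?R y # env)) = eval_expr h (y # ?R y # env)"
      by simp
  qed
  ultimately show ?thesis by (simp add: eval_expr.simps(5))
qed

fun ENum :: "nat \<Rightarrow> expr" where
  "ENum 0 = EZero"
| "ENum (Suc c) = ESuc (ENum c)"

lemma eval_ENum [simp]: "eval_expr (ENum c) env = c"
  by (induction c) auto

declare ENum.simps [simp del]

text \<open>Addition and multiplication need a recursion bound; \<open>(a + 2) ^ (b + 1)\<close> is one.\<close>

lemma add_mult_le_power: "(b + 1) * (a + 2) \<le> ((a::nat) + 2) ^ (b + 1)"
proof (induction b)
  case (Suc b)
  have "(Suc b + 1) * (a + 2) \<le> ((b + 1) * (a + 2)) * (a + 2)"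
    by (rule mult_le_mono1) (simp add: algebra_simps)
  also have "\<dots> \<le> (a + 2) ^ (b + 1) * (a + 2)"
    using Suc.IH by (rule mult_le_mono1)
  finally show ?case by (simp add: mult.commute)
qed simp

definition EAdd :: "expr \<Rightarrow> expr \<Rightarrow> expr" where
  "EAdd a b = ERec b a (ESuc (EVar 1)) (EPow (ESuc (ESuc a)) (ESuc b))"

lemma eval_EAdd [simp]: "eval_expr (EAdd a b) env = eval_expr a env + eval_expr b env"
proof -
  have rec_add: "rec_nat a (\<lambda>y r. Suc r) y = a + y" for a y :: nat
    by (induction y) auto
  have "eval_expr a env + y \<le> (eval_expr a env + 2) ^ (eval_expr b env + 1)"
    if "y \<le> eval_expr b env" for y
    using add_mult_le_power[of "eval_expr b env" "eval_expr a env"] that by (simp add: algebra_simps)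
  then show ?thesis
    unfolding EAdd_def by (subst eval_ERec) (auto simp: rec_add)
qed

definition EMul :: "expr \<Rightarrow> expr \<Rightarrow> expr" where
  "EMul a b = ERec b EZero (EAdd (EVar 1) (lift 2 a)) (EPow (ESuc (ESuc a)) (ESuc b))"

lemma eval_EMul [simp]: "eval_expr (EMul a b) env = eval_expr a env * eval_expr b env"
proof -
  have rec_mul: "rec_nat 0 (\<lambda>y r. r + a) y = a * y" for a y :: nat
    by (induction y) auto
  have "eval_expr a env * y \<le> (eval_expr a env + 2) ^ (eval_expr b env + 1)"
    if "y \<le> eval_expr b env" for y
  proof -
    have "eval_expr a env * y \<le> eval_expr a env * eval_expr b env"
      using that by simp
    also have "\<dots> \<le> (eval_expr b env + 1) * (eval_expr a env + 2)"
      by (simp add: algebra_simps)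
    also have "\<dots> \<le> (eval_expr a env + 2) ^ (eval_expr b env + 1)"
      by (rule add_mult_le_power)
    finally show ?thesis .
  qed
  then show ?thesis
    unfolding EMul_def by (subst eval_ERec) (auto simp: rec_mul)
qed

definition EPred :: "expr \<Rightarrow> expr" where
  "EPred e = ERec e EZero (EVar 0) e"

lemma eval_EPred [simp]: "eval_expr (EPred e) env = eval_expr e env - 1"
proof -
  have "rec_nat 0 (\<lambda>y r. y) y = y - 1" for y :: nat
    by (cases y) auto
  then show ?thesis
    unfolding EPred_def by (subst eval_ERec) auto
qed

definition EDiff :: "expr \<Rightarrow> expr \<Rightarrow> expr" where
  "EDiff a b = ERec b a (EPred (EVar 1)) a"

lemma eval_EDiff [simp]: "eval_expr (EDiff a b) env = eval_expr a env - eval_expr b env"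
proof -
  have "rec_nat a (\<lambda>y r. r - 1) y = a - y" for a y :: nat
    by (induction y) auto
  then show ?thesis
    unfolding EDiff_def by (subst eval_ERec) auto
qed

definition EMin :: "expr \<Rightarrow> expr \<Rightarrow> expr" where
  "EMin a b = EDiff a (EDiff a b)"

lemma eval_EMin [simp]: "eval_expr (EMin a b) env = min (eval_expr a env) (eval_expr b env)"
  unfolding EMin_def by simp

definition EIfZero :: "expr \<Rightarrow> expr \<Rightarrow> expr \<Rightarrow> expr" where
  "EIfZero c a b = EAdd (EMul a (EDiff (ENum 1) c)) (EMul b (EDiff (ENum 1) (EDiff (ENum 1) c)))"

lemma eval_EIfZero [simp]:
  "eval_expr (EIfZero c a b) env = (if eval_expr c env = 0 then eval_expr a env else eval_expr b env)"
  unfolding EIfZero_def by simp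

definition EIfEq :: "expr \<Rightarrow> expr \<Rightarrow> expr \<Rightarrow> expr \<Rightarrow> expr" where
  "EIfEq x y a b = EIfZero (EAdd (EDiff x y) (EDiff y x)) a b"

lemma eval_EIfEq [simp]:
  "eval_expr (EIfEq x y a b) env =
     (if eval_expr x env = eval_expr y env then eval_expr a env else eval_expr b env)"
  unfolding EIfEq_def by auto

definition EIfLess :: "expr \<Rightarrow> expr \<Rightarrow> expr \<Rightarrow> expr \<Rightarrow> expr" where
  "EIfLess x y a b = EIfZero (EDiff (ESuc x) y) a b"

lemma eval_EIfLess [simp]:
  "eval_expr (EIfLess x y a b) env =
     (if eval_expr x env < eval_expr y env then eval_expr a env else eval_expr b env)"
  unfolding EIfLess_def by auto

definition ESum :: "expr \<Rightarrow> expr \<Rightarrow> expr \<Rightarrow> expr" where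
  "ESum n b c = ERec n EZero (EAdd (EVar 1) (shift 1 1 b)) c"

lemma eval_ESum:
  assumes "(\<Sum>i<eval_expr n env. eval_expr b (i # env)) \<le> eval_expr c env"
  shows "eval_expr (ESum n b c) env = (\<Sum>i<eval_expr n env. eval_expr b (i # env))"
proof -
  have rec_sum: "rec_nat 0 (\<lambda>y r. r + f y) m = (\<Sum>i<m. f i :: nat)" for f m
    by (induction m) auto
  have "(\<Sum>i<y. eval_expr b (i # env)) \<le> eval_expr c env" if "y \<le> eval_expr n env" for y
    using sum_mono2[of "{..<eval_expr n env}" "{..<y}" "\<lambda>i. eval_expr b (i # env)"] that assms
    by auto
  then show ?thesis
    unfolding ESum_def by (subst eval_ERec) (auto simp: rec_sum)
qed

lemma sum_indicator_less: "q \<le> a \<Longrightarrow> (\<Sum>i<a. if i < q then 1 else 0) = (q::nat)"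
proof (induction a)
  case (Suc a)
  then show ?case by (cases "q = Suc a") auto
qed simp

text \<open>Quotients are counted: \<open>a div b = #{i < a. (i + 1) * b \<le> a}\<close>.\<close>

definition EDiv :: "expr \<Rightarrow> expr \<Rightarrow> expr" where
  "EDiv a b = EIfEq b EZero EZero
     (ESum a (EIfLess (lift 1 a) (EMul (ESuc (EVar 0)) (lift 1 b)) EZero (ENum 1)) a)"

lemma eval_EDiv [simp]: "eval_expr (EDiv a b) env = eval_expr a env div eval_expr b env"
proof (cases "eval_expr b env = 0")
  case True
  then show ?thesis unfolding EDiv_def by simp
next
  case False
  let ?a = "eval_expr a env" and ?b = "eval_expr b env"
  let ?body = "EIfLess (lift 1 a) (EMul (ESuc (EVar 0)) (lift 1 b)) EZero (ENum 1)"
  have "eval_expr ?body (i # env) = (if i < ?a div ?b then 1 else 0)" for i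
    using div_less_iff_less_mult[of ?b ?a "Suc i"] False by auto
  then have "(\<Sum>i<?a. eval_expr ?body (i # env)) = ?a div ?b"
    by (simp add: sum_indicator_less)
  then have "eval_expr (ESum a ?body a) env = ?a div ?b"
    by (subst eval_ESum) auto
  with False show ?thesis unfolding EDiv_def by simp
qed

definition EMod :: "expr \<Rightarrow> expr \<Rightarrow> expr" where
  "EMod a b = EDiff a (EMul b (EDiv a b))"

lemma eval_EMod [simp]: "eval_expr (EMod a b) env = eval_expr a env mod eval_expr b env"
  unfolding EMod_def by (simp add: minus_mult_div_eq_mod)

section \<open>Arithmetic coding of pairs, lists and digit strings\<close>

definition pair :: "nat \<Rightarrow> nat \<Rightarrow> nat" where
  "pair a b = 2 ^ a * (2 * b + 1)"

text \<open>The projections are written with bounded sums and divisions only, so that they have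
  \<open>\<E>\<^sup>3\<close> expressions: \<open>pair_fst n\<close> counts the powers of two dividing \<open>n\<close>.\<close>

definition pair_fst :: "nat \<Rightarrow> nat" where
  "pair_fst n = (\<Sum>k<n. if n mod 2 ^ (k + 1) = 0 then 1 else 0)"

definition pair_snd :: "nat \<Rightarrow> nat" where
  "pair_snd n = (n div 2 ^ pair_fst n - 1) div 2"

lemma fst_less_pair: "a < pair a b"
proof -
  have "a < 2 ^ a" by (rule less_exp)
  also have "\<dots> \<le> pair a b" unfolding pair_def by simp
  finally show ?thesis .
qed

lemma snd_less_pair: "b < pair a b"
proof -
  have "b < 2 * b + 1" by simp
  also have "\<dots> \<le> pair a b" unfolding pair_def using mult_le_mono1[of 1 "2 ^ a" "2 * b + 1"] by simp
  finally show ?thesis .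
qed

lemma pair_pos: "0 < pair a b"
  unfolding pair_def by simp

lemma power2_dvd_pair_iff: "2 ^ (k + 1) dvd pair a b \<longleftrightarrow> k < a"
proof
  assume "k < a"
  then have "2 ^ (k + 1) dvd (2::nat) ^ a" by (intro le_imp_power_dvd) simp
  then show "2 ^ (k + 1) dvd pair a b" unfolding pair_def by (rule dvd_mult2)
next
  assume dvd: "2 ^ (k + 1) dvd pair a b"
  show "k < a"
  proof (rule ccontr)
    assume "\<not> k < a"
    then have "2 ^ (a + 1) dvd (2::nat) ^ (k + 1)" by (intro le_imp_power_dvd) simp
    with dvd have "2 ^ a * 2 dvd 2 ^ a * (2 * b + 1)" unfolding pair_def
      by (metis dvd_trans power_Suc2 Suc_eq_plus1)
    then have "(2::nat) dvd 2 * b + 1" by (subst (asm) nat_mult_dvd_cancel_disj) simp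
    then show False by simp
  qed
qed

lemma pair_fst_pair [simp]: "pair_fst (pair a b) = a"
proof -
  have "pair_fst (pair a b) = (\<Sum>k<pair a b. if k < a then 1 else 0)"
    unfolding pair_fst_def
  proof (intro sum.cong refl)
    show "(if pair a b mod 2 ^ (k + 1) = 0 then 1 else 0) = (if k < a then 1 else (0::nat))" for k
      using power2_dvd_pair_iff[of k a b] by (simp only: dvd_eq_mod_eq_0)
  qed
  also have "\<dots> = a" using fst_less_pair[of a b] by (intro sum_indicator_less) simp
  finally show ?thesis .
qed

lemma pair_snd_pair [simp]: "pair_snd (pair a b) = b"
  unfolding pair_snd_def pair_fst_pair by (simp add: pair_def)

lemma pair_snd_0 [simp]: "pair_snd 0 = 0"
  by (simp add: pair_snd_def)

lemma pair_fst_le: "pair_fst n \<le> n"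
proof -
  have "pair_fst n \<le> (\<Sum>k<n. 1)" unfolding pair_fst_def by (intro sum_mono) simp
  then show ?thesis by simp
qed

lemma pair_snd_le: "pair_snd n \<le> n"
  unfolding pair_snd_def by (meson div_le_dividend diff_le_self le_trans)

primrec list_code :: "nat list \<Rightarrow> nat" where
  "list_code [] = 0"
| "list_code (c # cs) = pair c (list_code cs)"

definition code_drop :: "nat \<Rightarrow> nat \<Rightarrow> nat" where
  "code_drop i w = (pair_snd ^^ i) w"

definition code_nth :: "nat \<Rightarrow> nat \<Rightarrow> nat" where
  "code_nth w i = pair_fst (code_drop i w)"

definition code_length :: "nat \<Rightarrow> nat" where
  "code_length w = (\<Sum>i<w. if code_drop i w = 0 then 0 else 1)"

lemma code_drop_le: "code_drop i w \<le> w"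
  unfolding code_drop_def by (induction i) (auto intro: le_trans[OF pair_snd_le])

lemma code_drop_list_code: "code_drop i (list_code cs) = list_code (drop i cs)"
proof (induction i)
  case (Suc i)
  have "pair_snd (list_code cs') = list_code (tl cs')" for cs'
    by (cases cs') auto
  with Suc show ?case by (simp add: code_drop_def drop_Suc tl_drop)
qed (simp add: code_drop_def)

lemma code_nth_list_code: "i < length cs \<Longrightarrow> code_nth (list_code cs) i = cs ! i"
  unfolding code_nth_def code_drop_list_code by (simp add: Cons_nth_drop_Suc[symmetric])

lemma length_le_list_code: "length cs \<le> list_code cs"
  by (induction cs) (auto intro: Suc_leI le_less_trans[OF _ snd_less_pair])

lemma code_length_list_code: "code_length (list_code cs) = length cs"
proof -
  have "list_code cs' = 0 \<longleftrightarrow> cs' = []" for cs'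
    by (cases cs') (auto simp: pair_pos[THEN less_not_refl2])
  then have "code_length (list_code cs) = (\<Sum>i<list_code cs. if i < length cs then 1 else 0)"
    unfolding code_length_def code_drop_list_code by (intro sum.cong refl) auto
  also have "\<dots> = length cs" by (intro sum_indicator_less length_le_list_code)
  finally show ?thesis .
qed

lemma nth_less_list_code: "i < length cs \<Longrightarrow> cs ! i < list_code cs"
proof (induction cs arbitrary: i)
  case (Cons c cs)
  then show ?case
    using fst_less_pair[of c] snd_less_pair[of "list_code cs" c]
    by (cases i) (auto intro: less_trans)
qed simp

definition digit :: "nat \<Rightarrow> nat \<Rightarrow> nat \<Rightarrow> nat" where
  "digit B a i = a div B ^ i mod B"

lemma sum_digits_less: "(\<forall>j<M. s j < B) \<Longrightarrow> (\<Sum>j<M. s j * B ^ j) < (B::nat) ^ M"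
proof (induction M)
  case (Suc M)
  have "(\<Sum>j<Suc M. s j * B ^ j) < B ^ M + s M * B ^ M" using Suc by simp
  also have "\<dots> = (s M + 1) * B ^ M" by (simp add: algebra_simps)
  also have "\<dots> \<le> B * B ^ M"
  proof -
    have "s M < B" using Suc.prems by simp
    then show ?thesis by (intro mult_le_mono1) simp
  qed
  finally show ?case by simp
qed simp

lemma digit_sum_digits:
  assumes "\<forall>j<M. s j < B" "i < M"
  shows "digit B (\<Sum>j<M. s j * B ^ j) i = s i"
  using assms
proof (induction M)
  case (Suc M)
  have B: "0 < B" using Suc.prems by (metis gr0I not_less0 zero_less_Suc)
  let ?X = "\<Sum>j<M. s j * B ^ j"
  have X: "?X < B ^ M" using Suc.prems by (intro sum_digits_less) simp
  show ?case
  proof (cases "i < M")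
    case True
    have "B ^ M = B ^ i * (B * B ^ (M - Suc i))"
      using True by (simp flip: power_add power_Suc)
    then have split: "?X + s M * B ^ M = ?X + B ^ i * (B * (s M * B ^ (M - Suc i)))"
      by (simp add: ac_simps)
    have "(?X + s M * B ^ M) div B ^ i = ?X div B ^ i + B * (s M * B ^ (M - Suc i))"
      unfolding split using B by (simp add: div_mult_self2)
    then have "digit B (?X + s M * B ^ M) i = digit B ?X i"
      unfolding digit_def by (simp add: mod_mult_self2)
    with Suc True show ?thesis by simp
  next
    case False
    with Suc.prems have "i = M" by simp
    moreover have "(?X + s M * B ^ M) div B ^ M = s M"
      using X B by (simp add: div_add1_eq[of ?X] div_less)
    ultimately show ?thesis unfolding digit_def using Suc.prems by simp
  qed
qed simp

primrec from_digits :: "nat \<Rightarrow> nat list \<Rightarrow> nat" where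
  "from_digits B [] = 0"
| "from_digits B (x # xs) = x + B * from_digits B xs"

lemma from_digits_eq_sum: "from_digits B xs = (\<Sum>i<length xs. xs ! i * B ^ i)"
proof (induction xs)
  case (Cons x xs)
  have "(\<Sum>i<length (x # xs). (x # xs) ! i * B ^ i) = x + (\<Sum>i<length xs. xs ! i * B ^ Suc i)"
    by (simp add: sum.lessThan_Suc_shift del: sum.lessThan_Suc)
  also have "\<dots> = x + B * from_digits B xs" using Cons by (simp add: sum_distrib_left algebra_simps)
  finally show ?case by simp
qed simp

lemma from_digits_less: "\<forall>x\<in>set xs. x < B \<Longrightarrow> from_digits B xs < B ^ length xs"
  unfolding from_digits_eq_sum by (rule sum_digits_less) simp

lemma from_digits_Cons_div: "x < B \<Longrightarrow> from_digits B (x # xs) div B = from_digits B xs"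
  by simp

lemma digit_from_digits:
  assumes "\<forall>x\<in>set xs. x < B"
  shows "digit B (from_digits B xs) i = nth_default 0 xs i"
proof (cases "i < length xs")
  case True
  then show ?thesis
    using digit_sum_digits[of "length xs" "\<lambda>j. xs ! j" B i] assms
    by (simp add: from_digits_eq_sum nth_default_nth)
next
  case False
  show ?thesis
  proof (cases xs)
    case (Cons x xs')
    with assms have "0 < B" by auto
    have "from_digits B xs < B ^ length xs" using assms by (rule from_digits_less)
    also have "\<dots> \<le> B ^ i" using False \<open>0 < B\<close> by (intro power_increasing) auto
    finally show ?thesis using False by (simp add: digit_def nth_default_beyond)
  qed (simp add: digit_def)
qed

definition EPairFst :: "expr \<Rightarrow> expr" where
  "EPairFst e = ESum e (EIfEq (EMod (lift 1 e) (EPow (ENum 2) (ESuc (EVar 0)))) EZero (ENum 1) EZero) e"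

lemma eval_EPairFst [simp]: "eval_expr (EPairFst e) env = pair_fst (eval_expr e env)"
proof -
  have "(\<Sum>i<eval_expr e env.
          eval_expr (EIfEq (EMod (lift 1 e) (EPow (ENum 2) (ESuc (EVar 0)))) EZero (ENum 1) EZero) (i # env))
        = pair_fst (eval_expr e env)"
    unfolding pair_fst_def by (intro sum.cong refl) simp
  then show ?thesis
    unfolding EPairFst_def by (subst eval_ESum) (simp_all add: pair_fst_le)
qed

definition EPairSnd :: "expr \<Rightarrow> expr" where
  "EPairSnd e = EDiv (EPred (EDiv e (EPow (ENum 2) (EPairFst e)))) (ENum 2)"

lemma eval_EPairSnd [simp]: "eval_expr (EPairSnd e) env = pair_snd (eval_expr e env)"
  unfolding EPairSnd_def pair_snd_def by simp

definition ECodeDrop :: "expr \<Rightarrow> expr \<Rightarrow> expr" where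
  "ECodeDrop i w = ERec i w (EPairSnd (EVar 1)) w"

lemma eval_ECodeDrop [simp]:
  "eval_expr (ECodeDrop i w) env = code_drop (eval_expr i env) (eval_expr w env)"
proof -
  have rec_funpow: "rec_nat w (\<lambda>y r. f r) i = (f ^^ i) w" for w i and f :: "nat \<Rightarrow> nat"
    by (induction i) auto
  show ?thesis
    unfolding ECodeDrop_def
    by (subst eval_ERec) (auto simp: rec_funpow code_drop_def[symmetric] code_drop_le)
qed

definition ECodeNth :: "expr \<Rightarrow> expr \<Rightarrow> expr" where
  "ECodeNth w i = EPairFst (ECodeDrop i w)"

lemma eval_ECodeNth [simp]: "eval_expr (ECodeNth w i) env = code_nth (eval_expr w env) (eval_expr i env)"
  unfolding ECodeNth_def code_nth_def by simp

definition ECodeLength :: "expr \<Rightarrow> expr" where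
  "ECodeLength w = ESum w (EIfEq (ECodeDrop (EVar 0) (lift 1 w)) EZero EZero (ENum 1)) w"

lemma eval_ECodeLength [simp]: "eval_expr (ECodeLength w) env = code_length (eval_expr w env)"
proof -
  have "code_length w \<le> (\<Sum>i<w. 1)" for w
    unfolding code_length_def by (intro sum_mono) simp
  moreover have "(\<Sum>i<eval_expr w env.
      eval_expr (EIfEq (ECodeDrop (EVar 0) (lift 1 w)) EZero EZero (ENum 1)) (i # env))
      = code_length (eval_expr w env)"
    unfolding code_length_def by (intro sum.cong refl) simp
  ultimately show ?thesis
    unfolding ECodeLength_def by (subst eval_ESum) simp_all
qed

definition EDigit :: "expr \<Rightarrow> expr \<Rightarrow> expr \<Rightarrow> expr" where
  "EDigit b a i = EMod (EDiv a (EPow b i)) b"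

lemma eval_EDigit [simp]:
  "eval_expr (EDigit b a i) env = digit (eval_expr b env) (eval_expr a env) (eval_expr i env)"
  unfolding EDigit_def digit_def by simp

definition EDigits :: "expr \<Rightarrow> expr \<Rightarrow> expr \<Rightarrow> expr" where
  "EDigits n b f = ESum n (EMul (EMod f (lift 1 b)) (EPow (lift 1 b) (EVar 0))) (EPow b n)"

lemma eval_EDigits [simp]:
  "0 < eval_expr b env \<Longrightarrow> eval_expr (EDigits n b f) env =
     (\<Sum>i<eval_expr n env. (eval_expr f (i # env) mod eval_expr b env) * eval_expr b env ^ i)"
proof -
  assume b: "0 < eval_expr b env"
  have "(\<Sum>i<eval_expr n env. (eval_expr f (i # env) mod eval_expr b env) * eval_expr b env ^ i)
        < eval_expr b env ^ eval_expr n env"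
    using b by (intro sum_digits_less) simp
  then show ?thesis
    unfolding EDigits_def by (subst eval_ESum) simp_all
qed

section \<open>Terms for \<open>\<E>\<^sup>2\<close> functions\<close>

datatype gterm = GZero | GSuc | GProj nat | GMul | GComp gterm "gterm list" | GRec gterm gterm

text \<open>Clamping keeps all values at most \<open>D\<close>, which lets one \<open>\<E>\<^sup>3\<close> function tabulate them;
  for the polynomially bounded \<open>\<E>\<^sup>2\<close> functions it is invisible once \<open>D\<close> is large.\<close>

fun ceval :: "nat \<Rightarrow> gterm \<Rightarrow> nat list \<Rightarrow> nat" where
  "ceval D GZero xs = 0"
| "ceval D GSuc xs = min D (Suc (nth_default 0 xs 0))"
| "ceval D (GProj i) xs = nth_default 0 xs i"
| "ceval D GMul xs = min D (nth_default 0 xs 0 * nth_default 0 xs 1)"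
| "ceval D (GComp h gs) xs = ceval D h (map (\<lambda>g. ceval D g xs) gs)"
| "ceval D (GRec g h) xs =
     rec_nat (ceval D g (tl xs)) (\<lambda>y r. ceval D h (y # r # tl xs)) (nth_default 0 xs 0)"

lemma ceval_le: "\<forall>x\<in>set xs. x \<le> D \<Longrightarrow> ceval D t xs \<le> D"
proof (induction t arbitrary: xs)
  case (GProj i)
  then show ?case by (simp add: nth_default_def)
next
  case (GComp h gs)
  then show ?case by simp
next
  case (GRec g h)
  have tl_le: "\<forall>x\<in>set (tl xs). x \<le> D" using GRec.prems by (cases xs) auto
  have "rec_nat (ceval D g (tl xs)) (\<lambda>y r. ceval D h (y # r # tl xs)) x \<le> D" if "x \<le> D" for x
    using that GRec.IH tl_le by (induction x) auto
  moreover have "nth_default 0 xs 0 \<le> D"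
    using GRec.prems by (simp add: nth_default_def)
  ultimately show ?case by simp
qed auto

text \<open>Bounds the length of every argument list arising when \<open>t\<close> is evaluated on \<open>k\<close> arguments,
  so that \<open>(D + 1) ^ K\<close> bounds their base-\<open>(D + 1)\<close> codes.\<close>

fun arities_le :: "nat \<Rightarrow> nat \<Rightarrow> gterm \<Rightarrow> bool" where
  "arities_le K k (GComp h gs) \<longleftrightarrow> k \<le> K \<and> arities_le K (length gs) h \<and> (\<forall>g\<in>set gs. arities_le K k g)"
| "arities_le K k (GRec g h) \<longleftrightarrow> k \<le> K \<and> arities_le K (k - 1) g \<and> arities_le K (k - 1 + 2) h"
| "arities_le K k t \<longleftrightarrow> k \<le> K"

lemma arities_le_arity: "arities_le K k t \<Longrightarrow> k \<le> K"
  by (cases t) auto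

lemma arities_le_mono: "arities_le K k t \<Longrightarrow> K \<le> K' \<Longrightarrow> arities_le K' k t"
  by (induction K k t rule: arities_le.induct) auto

definition list_max :: "nat list \<Rightarrow> nat" where
  "list_max xs = foldr max xs 0"

lemma list_max_Nil [simp]: "list_max [] = 0"
  by (simp add: list_max_def)

lemma list_max_Cons [simp]: "list_max (x # xs) = max x (list_max xs)"
  by (simp add: list_max_def)

lemma list_max_le_iff: "list_max xs \<le> b \<longleftrightarrow> (\<forall>x\<in>set xs. x \<le> b)"
  by (induction xs) auto

lemma member_le_list_max: "x \<in> set xs \<Longrightarrow> x \<le> list_max xs"
  by (induction xs) auto

lemma nth_default_le_list_max: "nth_default 0 xs i \<le> list_max xs"
  by (simp add: nth_default_def member_le_list_max)

lemma power_nest_le: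
  assumes "1 \<le> c" "b \<le> (m + 2) ^ c"
  shows "(b + 2) ^ e \<le> ((m::nat) + 2) ^ ((c + 1) * e)"
proof -
  have "m + 2 \<le> (m + 2) ^ c"
    using power_increasing[OF assms(1), of "m + 2"] by simp
  then have "(m + 2) ^ c + 2 \<le> (m + 2) * (m + 2) ^ c" by (simp add: algebra_simps)
  then have "b + 2 \<le> (m + 2) ^ (c + 1)" using assms(2) by simp
  then have "(b + 2) ^ e \<le> ((m + 2) ^ (c + 1)) ^ e" by (rule power_mono) simp
  also have "\<dots> = (m + 2) ^ ((c + 1) * e)" by (rule power_mult[symmetric])
  finally show ?thesis .
qed

definition represents :: "nat \<Rightarrow> (nat list \<Rightarrow> nat) \<Rightarrow> gterm \<Rightarrow> nat \<Rightarrow> bool" where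
  "represents k F t c \<longleftrightarrow> 1 \<le> c \<and> (\<forall>xs. length xs = k \<longrightarrow> F xs \<le> (list_max xs + 2) ^ c \<and>
      (\<forall>D. (list_max xs + 2) ^ c \<le> D \<longrightarrow> ceval D t xs = F xs))"

lemma representsD:
  assumes "represents k F t c" "length xs = k"
  shows "1 \<le> c" "F xs \<le> (list_max xs + 2) ^ c" "(list_max xs + 2) ^ c \<le> D \<Longrightarrow> ceval D t xs = F xs"
  using assms unfolding represents_def by blast+

lemma representsI:
  assumes "1 \<le> c" "\<And>xs. length xs = k \<Longrightarrow> F xs \<le> (list_max xs + 2) ^ c"
    and "\<And>D xs. length xs = k \<Longrightarrow> F xs \<le> D \<Longrightarrow> ceval D t xs = F xs"
  shows "represents k F t c"
  unfolding represents_def using assms le_trans by blast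

lemma represents_comp:
  assumes h: "represents m H th ch" and gs: "\<forall>i<m. represents k (gs i) (T i) (C i)"
  defines "cg \<equiv> 1 + (\<Sum>i<m. C i)"
  shows "represents k (\<lambda>xs. H (map (\<lambda>i. gs i xs) [0..<m])) (GComp th (map T [0..<m]))
           ((cg + 1) * (ch + 1))"
  unfolding represents_def
proof (intro conjI allI impI)
  let ?c = "(cg + 1) * (ch + 1)"
  show "1 \<le> ?c" by simp
  fix xs :: "nat list" assume len: "length xs = k"
  let ?b = "(list_max xs + 2) ^ ?c"
  let ?ys = "map (\<lambda>i. gs i xs) [0..<m]"
  have C_le: "(list_max xs + 2) ^ C i \<le> (list_max xs + 2) ^ cg" if "i < m" for i
    using member_le_sum[of i "{..<m}" C] that unfolding cg_def by (intro power_increasing) auto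
  have "gs i xs \<le> (list_max xs + 2) ^ cg" if "i < m" for i
    using representsD(2)[OF gs[rule_format, OF that] len] C_le[OF that] by (rule le_trans)
  then have "list_max ?ys \<le> (list_max xs + 2) ^ cg"
    unfolding list_max_le_iff by auto
  then have "(list_max ?ys + 2) ^ ch \<le> (list_max xs + 2) ^ ((cg + 1) * ch)"
    by (intro power_nest_le) (simp_all add: cg_def)
  also have "\<dots> \<le> ?b" by (intro power_increasing) auto
  finally have ys_bound: "(list_max ?ys + 2) ^ ch \<le> ?b" .
  show "H ?ys \<le> ?b"
    using representsD(2)[OF h, of ?ys] ys_bound by (simp del: power_Suc)
  fix D assume D: "?b \<le> D"
  have "ceval D (T i) xs = gs i xs" if "i < m" for i
  proof (rule representsD(3)[OF gs[rule_format, OF that] len])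
    have "(list_max xs + 2) ^ C i \<le> ?b"
      using C_le[OF that] by (rule le_trans) (intro power_increasing, auto)
    then show "(list_max xs + 2) ^ C i \<le> D" using D by simp
  qed
  then have args: "map (\<lambda>g. ceval D g xs) (map T [0..<m]) = ?ys"
    unfolding map_map by (intro map_cong) auto
  have "ceval D (GComp th (map T [0..<m])) xs = ceval D th ?ys"
    by (simp only: ceval.simps args)
  also have "\<dots> = H ?ys"
    using representsD(3)[OF h, of ?ys D] ys_bound D by (simp del: power_Suc)
  finally show "ceval D (GComp th (map T [0..<m])) xs = H ?ys" .
qed

lemma rec_le_represented_bound:
  assumes j: "represents (k + 1) J tj cj"
    and bounded: "\<forall>x xs. length xs = k \<longrightarrow> rec_nat (G xs) (\<lambda>y r. H (y # r # xs)) x \<le> J (x # xs)"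
    and "length zs = k" "y \<le> x"
  shows "rec_nat (G zs) (\<lambda>y r. H (y # r # zs)) y \<le> (list_max (x # zs) + 2) ^ cj"
proof -
  have "rec_nat (G zs) (\<lambda>y r. H (y # r # zs)) y \<le> J (y # zs)" using bounded assms(3) by simp
  also have "\<dots> \<le> (list_max (y # zs) + 2) ^ cj" using representsD(2)[OF j, of "y # zs"] assms(3) by simp
  also have "\<dots> \<le> (list_max (x # zs) + 2) ^ cj" using assms(4) by (intro power_mono) auto
  finally show ?thesis .
qed

lemma represents_rec:
  assumes g: "represents k G tg cg" and h: "represents (k + 2) H th ch"
    and j: "represents (k + 1) J tj cj"
    and bounded: "\<forall>x xs. length xs = k \<longrightarrow> rec_nat (G xs) (\<lambda>y r. H (y # r # xs)) x \<le> J (x # xs)"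
  shows "represents (k + 1) (\<lambda>ys. rec_nat (G (tl ys)) (\<lambda>y r. H (y # r # tl ys)) (hd ys))
           (GRec tg th) ((cj + 1) * (ch + 1) + cg)"
  unfolding represents_def
proof (intro conjI allI impI)
  let ?c = "(cj + 1) * (ch + 1) + cg"
  show "1 \<le> ?c" by simp
  have cj: "1 \<le> cj" using j unfolding represents_def by simp
  fix ys :: "nat list" assume "length ys = k + 1"
  then obtain x zs where ys: "ys = x # zs" and len: "length zs = k" by (cases ys) auto
  let ?b = "(list_max ys + 2) ^ ?c"
  define R where "R = rec_nat (G zs) (\<lambda>y r. H (y # r # zs))"
  have R_bound: "R y \<le> (list_max ys + 2) ^ cj" if "y \<le> x" for y
    unfolding R_def ys using rec_le_represented_bound[OF j bounded len that] .
  have "(list_max ys + 2) ^ cj \<le> ?b" by (intro power_increasing) auto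
  then show "rec_nat (G (tl ys)) (\<lambda>y r. H (y # r # tl ys)) (hd ys) \<le> ?b"
    using R_bound[of x] unfolding R_def ys by simp
  fix D assume D: "?b \<le> D"
  have g_exact: "ceval D tg zs = G zs"
  proof (rule representsD(3)[OF g len])
    have "(list_max zs + 2) ^ cg \<le> (list_max ys + 2) ^ cg" unfolding ys by (intro power_mono) auto
    also have "\<dots> \<le> ?b" by (intro power_increasing) auto
    finally show "(list_max zs + 2) ^ cg \<le> D" using D by simp
  qed
  have h_exact: "ceval D th (y # R y # zs) = H (y # R y # zs)" if "y < x" for y
  proof (rule representsD(3)[OF h])
    have "list_max ys + 2 \<le> (list_max ys + 2) ^ cj"
      using power_increasing[OF cj, of "list_max ys + 2"] by simp
    then have "list_max (y # R y # zs) \<le> (list_max ys + 2) ^ cj"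
      using R_bound[of y] that unfolding ys by auto
    then have "(list_max (y # R y # zs) + 2) ^ ch \<le> (list_max ys + 2) ^ ((cj + 1) * ch)"
      by (rule power_nest_le[OF cj])
    also have "\<dots> \<le> ?b" by (intro power_increasing) auto
    finally show "(list_max (y # R y # zs) + 2) ^ ch \<le> D" using D by simp
  qed (use len in simp)
  have "ceval D (GRec tg th) ys = rec_nat (G zs) (\<lambda>y r. ceval D th (y # r # zs)) x"
    unfolding ys by (simp add: g_exact)
  also have "\<dots> = R x"
    unfolding R_def by (rule rec_nat_cong_upto) (use h_exact in \<open>simp add: R_def\<close>)
  finally show "ceval D (GRec tg th) ys = rec_nat (G (tl ys)) (\<lambda>y r. H (y # r # tl ys)) (hd ys)"
    unfolding ys R_def by simp
qed

lemma represents_cong: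
  "represents k F t c \<Longrightarrow> (\<And>xs. length xs = k \<Longrightarrow> G xs = F xs) \<Longrightarrow> represents k G t c"
  unfolding represents_def by simp

lemma represents_GZero: "represents 1 (\<lambda>xs. 0) GZero 1"
  by (rule representsI) auto

lemma represents_GSuc: "represents 1 (\<lambda>xs. xs ! 0 + 1) GSuc 1"
proof (rule representsI)
  fix xs :: "nat list" assume len: "length xs = 1"
  then show "xs ! 0 + 1 \<le> (list_max xs + 2) ^ 1"
    using nth_default_le_list_max[of xs 0] by (simp add: nth_default_nth)
  show "ceval D GSuc xs = xs ! 0 + 1" if "xs ! 0 + 1 \<le> D" for D
    using that len by (simp add: nth_default_nth)
qed simp

lemma represents_GProj: "i < k \<Longrightarrow> represents k (\<lambda>xs. xs ! i) (GProj i) 1"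
proof (rule representsI)
  fix xs :: "nat list" assume "i < k" "length xs = k"
  then show "xs ! i \<le> (list_max xs + 2) ^ 1" "ceval D (GProj i) xs = xs ! i" for D
    using nth_default_le_list_max[of xs i] by (simp_all add: nth_default_nth)
qed simp

lemma represents_GMul: "represents 2 (\<lambda>xs. xs ! 0 * xs ! 1) GMul 2"
proof (rule representsI)
  fix xs :: "nat list" assume len: "length xs = 2"
  then have "xs ! 0 \<le> list_max xs" "xs ! 1 \<le> list_max xs"
    using nth_default_le_list_max[of xs 0] nth_default_le_list_max[of xs 1]
    by (auto simp: nth_default_nth)
  then show "xs ! 0 * xs ! 1 \<le> (list_max xs + 2) ^ 2"
    unfolding power2_eq_square by (intro mult_le_mono) auto
  show "ceval D GMul xs = xs ! 0 * xs ! 1" if "xs ! 0 * xs ! 1 \<le> D" for D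
    using that len by (simp add: nth_default_nth)
qed simp

definition representable :: "nat \<Rightarrow> (nat list \<Rightarrow> nat) \<Rightarrow> bool" where
  "representable k F \<longleftrightarrow> (\<exists>t c K. represents k F t c \<and> arities_le K k t)"

lemma representableI: "represents k F t c \<Longrightarrow> arities_le K k t \<Longrightarrow> representable k F"
  unfolding representable_def by blast

lemma representable_comp:
  assumes h: "representable m H" and gs: "\<forall>i<m. representable k (gs i)"
  shows "representable k (\<lambda>xs. H (map (\<lambda>i. gs i xs) [0..<m]))"
proof -
  obtain th ch Kh where th: "represents m H th ch" "arities_le Kh m th"
    using h unfolding representable_def by blast
  have "\<forall>i<m. \<exists>p. represents k (gs i) (fst p) (fst (snd p)) \<and> arities_le (snd (snd p)) k (fst p)"
    using gs unfolding representable_def by fastforce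
  then obtain p where p:
    "\<forall>i<m. represents k (gs i) (fst (p i)) (fst (snd (p i))) \<and> arities_le (snd (snd (p i))) k (fst (p i))"
    by metis
  define T where "T i = fst (p i)" for i
  define C where "C i = fst (snd (p i))" for i
  define Ks where "Ks i = snd (snd (p i))" for i
  have T: "\<forall>i<m. represents k (gs i) (T i) (C i) \<and> arities_le (Ks i) k (T i)"
    using p unfolding T_def C_def Ks_def by blast
  let ?K = "k + m + Kh + (\<Sum>i<m. Ks i)"
  have "arities_le ?K k (T i)" if "i < m" for i
    using T that member_le_sum[of i "{..<m}" Ks] by (auto elim!: arities_le_mono)
  then have "arities_le ?K k (GComp th (map T [0..<m]))"
    using arities_le_mono[OF th(2), of ?K] by auto
  with represents_comp[OF th(1)] T show ?thesis
    by (blast intro: representableI)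
qed

lemma representable_rec:
  assumes "representable k G" "representable (k + 2) H" "representable (k + 1) J"
    and "\<forall>x xs. length xs = k \<longrightarrow> rec_nat (G xs) (\<lambda>y r. H (y # r # xs)) x \<le> J (x # xs)"
  shows "representable (k + 1) (\<lambda>ys. rec_nat (G (tl ys)) (\<lambda>y r. H (y # r # tl ys)) (hd ys))"
proof -
  obtain tg cg Kg where g: "represents k G tg cg" "arities_le Kg k tg"
    using assms(1) unfolding representable_def by blast
  obtain th ch Kh where h: "represents (k + 2) H th ch" "arities_le Kh (k + 2) th"
    using assms(2) unfolding representable_def by blast
  obtain tj cj where j: "represents (k + 1) J tj cj"
    using assms(3) unfolding representable_def by blast
  have "arities_le (k + 1 + Kg + Kh) (k + 1) (GRec tg th)"
    using arities_le_mono[OF g(2), of "k + 1 + Kg + Kh"] arities_le_mono[OF h(2), of "k + 1 + Kg + Kh"]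
    by simp
  with represents_rec[OF g(1) h(1) j assms(4)] show ?thesis
    by (rule representableI)
qed

lemma grz_f_2_eq_mult: "grz_f 2 x y = x * y"
  by (simp add: numeral_2_eq_2)

lemma grz2_representable: "(k, F) \<in> grz 2 \<Longrightarrow> representable k F"
proof (induction rule: grz.induct)
  case zero
  show ?case by (rule representableI[OF represents_GZero, of 1]) simp
next
  case succ
  show ?case by (rule representableI[OF represents_GSuc, of 1]) simp
next
  case (proj i k)
  show ?case by (rule representableI[OF represents_GProj[OF proj], of k]) simp
next
  case fn
  have "represents 2 (\<lambda>xs. grz_f 2 (xs ! 0) (xs ! 1)) GMul 2"
    by (rule represents_cong[OF represents_GMul]) (simp add: grz_f_2_eq_mult)
  then show ?case by (rule representableI[of _ _ _ _ 2]) simp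
next
  case (comp m h k gs)
  show ?case by (rule representable_comp[OF comp.IH(1)]) (use comp.IH(2) in blast)
next
  case (bprec k g h j)
  show ?case by (rule representable_rec[OF bprec.IH bprec.hyps(4)])
next
  case (ext k f g)
  then obtain t c K where "represents k f t c" "arities_le K k t"
    unfolding representable_def by blast
  with ext.hyps(2) show ?case
    by (intro representableI[OF represents_cong]) auto
qed

lemma grz2_subset_grz3: "(k, F) \<in> grz 2 \<Longrightarrow> (k, F) \<in> grz 3"
proof (induction rule: grz.induct)
  case zero
  show ?case by (rule grz.zero)
next
  case succ
  show ?case by (rule grz.succ)
next
  case (proj i k)
  then show ?case by (rule grz.proj)
next
  case fn
  have "(2, eval_expr (EMul (EVar 0) (EVar 1))) \<in> grz 3" by (rule grz3_eval_expr) simp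
  then show ?case by (rule grz_cong) (simp add: grz_f_2_eq_mult nth_default_nth)
next
  case (comp m h k gs)
  then show ?case by (blast intro: grz.comp)
next
  case (bprec k g h j)
  then show ?case by (blast intro: grz.bprec)
next
  case (ext k f g)
  then show ?case by (blast intro: grz.ext)
qed

section \<open>A universal table in \<open>\<E>\<^sup>3\<close>\<close>

fun gcode :: "gterm \<Rightarrow> nat" where
  "gcode GZero = pair 0 0"
| "gcode GSuc = pair 1 0"
| "gcode (GProj i) = pair 2 i"
| "gcode GMul = pair 3 0"
| "gcode (GComp h gs) = pair 4 (pair (gcode h) (list_code (map gcode gs)))"
| "gcode (GRec g h) = pair 5 (pair (gcode g) (gcode h))"

lemma gcode_GComp_less:
  shows "gcode h < gcode (GComp h gs)" and "g \<in> set gs \<Longrightarrow> gcode g < gcode (GComp h gs)"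
proof -
  have outer: "pair (gcode h) (list_code (map gcode gs)) < gcode (GComp h gs)"
    using snd_less_pair by simp
  then show "gcode h < gcode (GComp h gs)"
    using fst_less_pair[of "gcode h"] by (meson less_trans)
  assume "g \<in> set gs"
  then obtain i where "i < length gs" "gs ! i = g" by (auto simp: in_set_conv_nth)
  then have "gcode g < list_code (map gcode gs)"
    using nth_less_list_code[of i "map gcode gs"] by simp
  then show "gcode g < gcode (GComp h gs)"
    using outer snd_less_pair[of "list_code (map gcode gs)" "gcode h"] by linarith
qed

lemma gcode_GRec_less: "gcode g < gcode (GRec g h)" "gcode h < gcode (GRec g h)"
proof -
  have "pair (gcode g) (gcode h) < gcode (GRec g h)" using snd_less_pair by simp
  then show "gcode g < gcode (GRec g h)" "gcode h < gcode (GRec g h)"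
    using fst_less_pair[of "gcode g" "gcode h"] snd_less_pair[of "gcode h" "gcode g"] by linarith+
qed

fun depth :: "gterm \<Rightarrow> nat" where
  "depth (GComp h gs) = Suc (max (depth h) (list_max (map depth gs)))"
| "depth (GRec g h) = Suc (max (depth g) (depth h))"
| "depth t = 1"

lemma depth_pos: "0 < depth t"
  by (cases t) auto

lemma depth_GComp_less: "g \<in> set gs \<Longrightarrow> depth g < depth (GComp h gs)"
  using member_le_list_max[of "depth g" "map depth gs"] by auto

lemma depth_le_gcode: "depth t \<le> gcode t"
proof (induction t)
  case (GComp h gs)
  have "depth g < gcode (GComp h gs)" if "g \<in> set gs" for g
    using GComp.IH(2)[OF that] gcode_GComp_less(2)[OF that, of h] by simp
  moreover have "list_max xs < b" if "0 < b" "\<forall>x\<in>set xs. x < b" for xs and b :: nat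
    using that by (induction xs) auto
  ultimately have "list_max (map depth gs) < gcode (GComp h gs)"
    using pair_pos[of 4] by simp
  moreover have "depth h < gcode (GComp h gs)"
    using GComp.IH(1) gcode_GComp_less(1)[of h gs] by simp
  ultimately show ?case by simp
next
  case (GRec g h)
  have "depth g < gcode (GRec g h)" "depth h < gcode (GRec g h)"
    using le_less_trans[OF GRec.IH(1) gcode_GRec_less(1)] le_less_trans[OF GRec.IH(2) gcode_GRec_less(2)]
    by simp_all
  then show ?case by (simp del: gcode.simps)
qed (auto simp: pair_pos Suc_leI)

text \<open>A table \<open>T\<close> stores, as base-\<open>B\<close> digit (\<open>B = D + 1\<close>)
  number \<open>c * A + a\<close>, the clamped value of the term with code \<open>c\<close> on the argument list whose
  base-\<open>B\<close> digits are \<open>a\<close>.  \<open>EStep\<close> recomputes that entry from the tag of \<open>c\<close>, reading the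
  values of the immediate subterms off \<open>T\<close>; a recursion of length at most \<open>D\<close> is run directly.\<close>

definition EStep :: "expr \<Rightarrow> expr \<Rightarrow> expr \<Rightarrow> expr \<Rightarrow> expr \<Rightarrow> expr" where
  "EStep T c a D A = (let B = ESuc D; tag = EPairFst c; arg = EPairSnd c in
    EIfEq tag (ENum 0) EZero
    (EIfEq tag (ENum 1) (EMin D (ESuc (EDigit B a EZero)))
    (EIfEq tag (ENum 2) (EDigit B a arg)
    (EIfEq tag (ENum 3) (EMin D (EMul (EDigit B a EZero) (EDigit B a (ENum 1))))
    (EIfEq tag (ENum 4) (EDigit B T (EAdd (EMul (EPairFst arg) A)
        (EDigits (ECodeLength (EPairSnd arg)) B
          (EDigit (lift 1 B) (lift 1 T)
            (EAdd (EMul (ECodeNth (lift 1 (EPairSnd arg)) (EVar 0)) (lift 1 A)) (lift 1 a))))))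
    (EIfEq tag (ENum 5) (ERec (EDigit B a EZero) (EDigit B T (EAdd (EMul (EPairFst arg) A) (EDiv a B)))
        (EDigit (lift 2 B) (lift 2 T) (EAdd (EMul (EPairSnd (lift 2 arg)) (lift 2 A))
          (EAdd (EVar 0) (EAdd (EMul (lift 2 B) (EVar 1))
            (EMul (EMul (lift 2 B) (lift 2 B)) (EDiv (lift 2 a) (lift 2 B))))))) D)
    EZero))))))"

definition table_step :: "nat \<Rightarrow> nat \<Rightarrow> nat \<Rightarrow> nat \<Rightarrow> nat \<Rightarrow> nat" where
  "table_step D A T c a = eval_expr (EStep (EVar 0) (EVar 1) (EVar 2) (EVar 3) (EVar 4)) [T, c, a, D, A]"

lemma eval_EStep [simp]:
  "eval_expr (EStep T c a D A) env =
     table_step (eval_expr D env) (eval_expr A env) (eval_expr T env) (eval_expr c env) (eval_expr a env)"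
  unfolding table_step_def EStep_def Let_def by (simp add: eval_expr.simps(5) nth_default_def)

lemma table_step_simps:
  fixes D A T c a :: nat
  defines "B \<equiv> Suc D"
  shows "pair_fst c = 0 \<Longrightarrow> table_step D A T c a = 0"
    and "pair_fst c = 1 \<Longrightarrow> table_step D A T c a = min D (Suc (digit B a 0))"
    and "pair_fst c = 2 \<Longrightarrow> table_step D A T c a = digit B a (pair_snd c)"
    and "pair_fst c = 3 \<Longrightarrow> table_step D A T c a = min D (digit B a 0 * digit B a 1)"
    and "pair_fst c = 4 \<Longrightarrow> table_step D A T c a = digit B T (pair_fst (pair_snd c) * A +
           (\<Sum>i<code_length (pair_snd (pair_snd c)).
              (digit B T (code_nth (pair_snd (pair_snd c)) i * A + a) mod B) * B ^ i))"
    and "pair_fst c = 5 \<Longrightarrow> table_step D A T c a =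
           rec_nat (min D (digit B T (pair_fst (pair_snd c) * A + a div B)))
             (\<lambda>y r. min D (digit B T (pair_snd (pair_snd c) * A + (y + (B * r + B * B * (a div B))))))
             (digit B a 0)"
  unfolding table_step_def EStep_def Let_def B_def by (simp_all add: eval_expr.simps(5) nth_default_def)

definition table_next :: "nat \<Rightarrow> nat \<Rightarrow> nat \<Rightarrow> nat \<Rightarrow> nat" where
  "table_next D A N T = (\<Sum>i<N * A. (table_step D A T (i div A) (i mod A) mod Suc D) * Suc D ^ i)"

definition ETableNext :: "expr \<Rightarrow> expr \<Rightarrow> expr \<Rightarrow> expr \<Rightarrow> expr" where
  "ETableNext D A N T = EDigits (EMul N A) (ESuc D)
     (EStep (lift 1 T) (EDiv (EVar 0) (lift 1 A)) (EMod (EVar 0) (lift 1 A)) (lift 1 D) (lift 1 A))"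

lemma eval_ETableNext [simp]:
  "eval_expr (ETableNext D A N T) env =
     table_next (eval_expr D env) (eval_expr A env) (eval_expr N env) (eval_expr T env)"
  unfolding ETableNext_def table_next_def by simp

lemma table_next_less: "table_next D A N T < Suc D ^ (N * A)"
  unfolding table_next_def by (rule sum_digits_less) simp

lemma digit_table_next:
  assumes "c < N" "a < A"
  shows "digit (Suc D) (table_next D A N T) (c * A + a) = table_step D A T c a mod Suc D"
proof -
  have "c * A + a < Suc c * A" using assms(2) by simp
  also have "\<dots> \<le> N * A" using assms(1) by (intro mult_le_mono1) simp
  finally have "c * A + a < N * A" .
  then show ?thesis
    unfolding table_next_def using assms(2) by (subst digit_sum_digits) auto
qed

definition table :: "nat \<Rightarrow> nat \<Rightarrow> nat \<Rightarrow> nat \<Rightarrow> nat" where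
  "table D A N d = (table_next D A N ^^ d) 0"

definition ETable :: "expr \<Rightarrow> expr \<Rightarrow> expr \<Rightarrow> expr \<Rightarrow> expr" where
  "ETable D A N d = ERec d EZero (ETableNext (lift 2 D) (lift 2 A) (lift 2 N) (EVar 1)) (EPow (ESuc D) (EMul N A))"

lemma eval_ETable [simp]:
  "eval_expr (ETable D A N d) env =
     table (eval_expr D env) (eval_expr A env) (eval_expr N env) (eval_expr d env)"
proof -
  have rec_funpow: "rec_nat w (\<lambda>y r. f r) i = (f ^^ i) w" for w i and f :: "nat \<Rightarrow> nat"
    by (induction i) auto
  have "rec_nat 0 (\<lambda>y r. table_next (eval_expr D env) (eval_expr A env) (eval_expr N env) r) y
          \<le> Suc (eval_expr D env) ^ (eval_expr N env * eval_expr A env)" for y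
    by (cases y) (auto intro: less_imp_le table_next_less)
  then show ?thesis
    unfolding ETable_def table_def by (subst eval_ERec) (auto simp: rec_funpow)
qed

definition tabulates :: "nat \<Rightarrow> nat \<Rightarrow> nat \<Rightarrow> nat \<Rightarrow> nat \<Rightarrow> bool" where
  "tabulates D K N d T \<longleftrightarrow> (\<forall>t xs. depth t \<le> d \<longrightarrow> gcode t < N \<longrightarrow> arities_le K (length xs) t \<longrightarrow>
     (\<forall>x\<in>set xs. x \<le> D) \<longrightarrow>
     digit (Suc D) T (gcode t * Suc D ^ K + from_digits (Suc D) xs) = ceval D t xs)"

lemma tabulatesD:
  assumes "tabulates D K N d T" "depth t \<le> d" "gcode t < N" "arities_le K (length xs) t"
    "\<forall>x\<in>set xs. x \<le> D"
  shows "digit (Suc D) T (gcode t * Suc D ^ K + from_digits (Suc D) xs) = ceval D t xs"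
  using assms unfolding tabulates_def by blast

lemma from_digits_less_arity:
  assumes "arities_le K (length xs) t" "\<forall>x\<in>set xs. x \<le> D"
  shows "from_digits (Suc D) xs < Suc D ^ K"
proof -
  have "from_digits (Suc D) xs < Suc D ^ length xs"
    using assms(2) by (intro from_digits_less) auto
  also have "\<dots> \<le> Suc D ^ K"
    using arities_le_arity[OF assms(1)] by (intro power_increasing) auto
  finally show ?thesis .
qed

lemma table_step_GComp:
  assumes T: "tabulates D K N d T" and t: "depth (GComp h gs) \<le> Suc d" "gcode (GComp h gs) < N"
    and xs: "arities_le K (length xs) (GComp h gs)" "\<forall>x\<in>set xs. x \<le> D"
  shows "table_step D (Suc D ^ K) T (gcode (GComp h gs)) (from_digits (Suc D) xs) = ceval D (GComp h gs) xs"
proof -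
  let ?B = "Suc D" and ?A = "Suc D ^ K" and ?ys = "map (\<lambda>g. ceval D g xs) gs"
  have ys: "\<forall>y\<in>set ?ys. y \<le> D" using ceval_le[OF xs(2)] by auto
  have "digit ?B T (gcode (gs ! i) * ?A + from_digits ?B xs) mod ?B = ?ys ! i" if "i < length gs" for i
  proof -
    have g: "gs ! i \<in> set gs" using that by simp
    have "digit ?B T (gcode (gs ! i) * ?A + from_digits ?B xs) = ceval D (gs ! i) xs"
      using depth_GComp_less[OF g, of h] gcode_GComp_less(2)[OF g, of h] t xs g
      by (intro tabulatesD[OF T]) auto
    then show ?thesis using ceval_le[OF xs(2), of "gs ! i"] that by simp
  qed
  then have "(\<Sum>i<code_length (list_code (map gcode gs)).
        (digit ?B T (code_nth (list_code (map gcode gs)) i * ?A + from_digits ?B xs) mod ?B) * ?B ^ i)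
      = from_digits ?B ?ys"
    by (simp add: code_length_list_code code_nth_list_code from_digits_eq_sum)
  moreover have "digit ?B T (gcode h * ?A + from_digits ?B ?ys) = ceval D h ?ys"
    using gcode_GComp_less(1)[of h gs] t xs ys by (intro tabulatesD[OF T]) auto
  ultimately show ?thesis by (simp add: table_step_simps)
qed

lemma table_step_GRec:
  assumes T: "tabulates D K N d T" and t: "depth (GRec g h) \<le> Suc d" "gcode (GRec g h) < N"
    and xs: "arities_le K (length xs) (GRec g h)" "\<forall>x\<in>set xs. x \<le> D"
  shows "table_step D (Suc D ^ K) T (gcode (GRec g h)) (from_digits (Suc D) xs) = ceval D (GRec g h) xs"
proof -
  let ?B = "Suc D" and ?A = "Suc D ^ K"
  let ?R = "rec_nat (ceval D g (tl xs)) (\<lambda>y r. ceval D h (y # r # tl xs))"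
  have xsB: "\<forall>x\<in>set xs. x < ?B" using xs(2) by auto
  have tl_le: "\<forall>x\<in>set (tl xs). x \<le> D" using xs(2) by (cases xs) auto
  have x_le: "nth_default 0 xs 0 \<le> D" using xs(2) by (simp add: nth_default_def)
  have from_digits_tl: "from_digits ?B xs div ?B = from_digits ?B (tl xs)"
    using xsB from_digits_Cons_div[of "hd xs" ?B "tl xs"] by (cases xs) simp_all
  have base: "min D (digit ?B T (gcode g * ?A + from_digits ?B (tl xs))) = ceval D g (tl xs)"
    using tabulatesD[OF T _ _ _ tl_le, of g] gcode_GRec_less(1)[of g h] t xs ceval_le[OF tl_le, of g]
    by simp
  have step: "min D (digit ?B T (gcode h * ?A + (y + (?B * ?R y + ?B * ?B * from_digits ?B (tl xs)))))
      = ceval D h (y # ?R y # tl xs)" if y: "y < nth_default 0 xs 0" for y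
  proof -
    have "?R y = ceval D (GRec g h) (y # tl xs)" by simp
    then have "?R y \<le> D" using ceval_le[of "y # tl xs" D "GRec g h"] y x_le tl_le by auto
    then have args: "\<forall>x\<in>set (y # ?R y # tl xs). x \<le> D" using y x_le tl_le by auto
    have eq: "y + (?B * ?R y + ?B * ?B * from_digits ?B (tl xs)) = from_digits ?B (y # ?R y # tl xs)"
      by (simp add: algebra_simps)
    have "digit ?B T (gcode h * ?A + from_digits ?B (y # ?R y # tl xs)) = ceval D h (y # ?R y # tl xs)"
      using gcode_GRec_less(2)[of h g] t xs by (intro tabulatesD[OF T _ _ _ args]) auto
    then show ?thesis
      unfolding eq using ceval_le[OF args, of h] by (simp del: from_digits.simps)
  qed
  have "rec_nat (min D (digit ?B T (gcode g * ?A + from_digits ?B (tl xs))))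
      (\<lambda>y r. min D (digit ?B T (gcode h * ?A + (y + (?B * r + ?B * ?B * from_digits ?B (tl xs))))))
      (nth_default 0 xs 0) = ?R (nth_default 0 xs 0)"
    unfolding base by (rule rec_nat_cong_upto) (rule step)
  then show ?thesis
    using digit_from_digits[OF xsB, of 0] from_digits_tl by (simp add: table_step_simps)
qed

lemma table_step_ceval:
  assumes T: "tabulates D K N d T" and t: "depth t \<le> Suc d" "gcode t < N"
    and xs: "arities_le K (length xs) t" "\<forall>x\<in>set xs. x \<le> D"
  shows "table_step D (Suc D ^ K) T (gcode t) (from_digits (Suc D) xs) = ceval D t xs"
proof -
  have xsB: "\<forall>x\<in>set xs. x < Suc D" using xs(2) by auto
  show ?thesis
  proof (cases t)
    case (GComp h gs)
    then show ?thesis using table_step_GComp[OF T] t xs by simp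
  next
    case (GRec g h)
    then show ?thesis using table_step_GRec[OF T] t xs by simp
  qed (simp_all add: table_step_simps digit_from_digits[OF xsB])
qed

lemma tabulates_table: "tabulates D K N d (table D (Suc D ^ K) N d)"
proof (induction d)
  case 0
  show ?case unfolding tabulates_def using depth_pos not_le by blast
next
  case (Suc d)
  show ?case
    unfolding tabulates_def
  proof (intro allI impI)
    fix t xs assume t: "depth t \<le> Suc d" "gcode t < N"
      and xs: "arities_le K (length xs) t" "\<forall>x\<in>set xs. x \<le> D"
    have "digit (Suc D) (table D (Suc D ^ K) N (Suc d)) (gcode t * Suc D ^ K + from_digits (Suc D) xs)
        = table_step D (Suc D ^ K) (table D (Suc D ^ K) N d) (gcode t) (from_digits (Suc D) xs) mod Suc D"
      using digit_table_next[OF t(2) from_digits_less_arity[OF xs]] by (simp add: table_def)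
    also have "\<dots> = ceval D t xs mod Suc D"
      using table_step_ceval[OF Suc t xs] by simp
    also have "\<dots> = ceval D t xs"
      using ceval_le[OF xs(2), of t] by simp
    finally show "digit (Suc D) (table D (Suc D ^ K) N (Suc d))
        (gcode t * Suc D ^ K + from_digits (Suc D) xs) = ceval D t xs" .
  qed
qed

section \<open>The diagonal real\<close>

text \<open>The \<open>i\<close>-th base-4 digit of the diagonal real, given the numerator \<open>S\<close> of the first \<open>i\<close> digits.
  The index \<open>i = pair (pair cf (pair cg ch)) q\<close> names three term codes and an exponent \<open>q\<close>.  At
  \<open>x = 4 ^ (i + 2)\<close> the table clamped at \<open>D = (x + 2) ^ q\<close> yields values \<open>vf, vg, vh\<close> (the true
  values \<open>f x, g x, h x\<close> if the codes represent \<open>\<E>\<^sup>2\<close> functions with exponents below \<open>q\<close>), and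
  the digit is \<open>2\<close> or \<open>0\<close> according to whether \<open>(vf - vg) / (vh + 1)\<close> lies below or above
  \<open>S / 4 ^ i + 1 / (3 * 4 ^ i)\<close>.\<close>

definition EDiag :: "expr \<Rightarrow> expr \<Rightarrow> expr" where
  "EDiag I S = (let X = EPow (ENum 4) (EAdd I (ENum 2)); p = EPairFst I; q = EPairSnd I;
     D = EPow (EAdd X (ENum 2)) q; B = ESuc D; A = EPow B q; T = ETable D A I I;
     vf = EDigit B T (EAdd (EMul (EPairFst p) A) X);
     vg = EDigit B T (EAdd (EMul (EPairFst (EPairSnd p)) A) X);
     vh = EDigit B T (EAdd (EMul (EPairSnd (EPairSnd p)) A) X) in
     EIfLess (EMul (EMul (ENum 3) (EPow (ENum 4) I)) vf)
       (EAdd (EMul (EAdd (EMul (ENum 3) S) (ENum 1)) (ESuc vh)) (EMul (EMul (ENum 3) (EPow (ENum 4) I)) vg))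
       (ENum 2) EZero)"

definition diag_digit :: "nat \<Rightarrow> nat \<Rightarrow> nat" where
  "diag_digit i s = eval_expr (EDiag (EVar 0) (EVar 1)) [i, s]"

lemma eval_EDiag [simp]: "eval_expr (EDiag I S) env = diag_digit (eval_expr I env) (eval_expr S env)"
  unfolding diag_digit_def EDiag_def Let_def by (simp add: nth_default_def)

lemma diag_digit_eq:
  fixes i s :: nat
  defines "x \<equiv> 4 ^ (i + 2)"
  defines "D \<equiv> (x + 2) ^ pair_snd i"
  defines "A \<equiv> Suc D ^ pair_snd i"
  defines "entry c \<equiv> digit (Suc D) (table D A i i) (c * A + x)"
  shows "diag_digit i s =
    (if 3 * 4 ^ i * entry (pair_fst (pair_fst i))
        < (3 * s + 1) * Suc (entry (pair_snd (pair_snd (pair_fst i))))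
          + 3 * 4 ^ i * entry (pair_fst (pair_snd (pair_fst i)))
     then 2 else 0)"
  unfolding diag_digit_def EDiag_def Let_def x_def D_def A_def entry_def by (simp add: nth_default_def)

lemma diag_digit_le: "diag_digit i s \<le> 2"
  by (simp add: diag_digit_eq)

definition diag_num :: "nat \<Rightarrow> nat" where
  "diag_num n = rec_nat 0 (\<lambda>i s. 4 * s + diag_digit i s) n"

lemma diag_num_0 [simp]: "diag_num 0 = 0"
  by (simp add: diag_num_def)

lemma diag_num_Suc: "diag_num (Suc n) = 4 * diag_num n + diag_digit n (diag_num n)"
  by (simp add: diag_num_def)

lemma diag_num_less: "diag_num n < 4 ^ n"
proof (induction n)
  case (Suc n)
  have "diag_num (Suc n) \<le> 4 * diag_num n + 2"
    using diag_digit_le[of n "diag_num n"] by (simp add: diag_num_Suc)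
  also have "\<dots> < 4 * 4 ^ n" using Suc by simp
  finally show ?case by simp
qed simp

lemma grz3_diag_num: "grz_unary 3 diag_num"
proof -
  let ?e = "ERec (EVar 0) EZero (EAdd (EMul (ENum 4) (EVar 1)) (EDiag (EVar 0) (EVar 1)))
    (EPow (ENum 4) (EVar 0))"
  have eval_eq: "eval_expr ?e [n] = diag_num n" for n
  proof -
    have "rec_nat 0 (\<lambda>y r. 4 * r + diag_digit y r) y \<le> 4 ^ n" if "y \<le> n" for y
    proof -
      have "(4::nat) ^ y \<le> 4 ^ n" using that by simp
      then have "diag_num y \<le> 4 ^ n" using diag_num_less[of y] by linarith
      then show ?thesis by (simp add: diag_num_def)
    qed
    then show ?thesis
      by (subst eval_ERec) (auto simp: diag_num_def nth_default_def)
  qed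
  have "(1, eval_expr ?e) \<in> grz 3" by (rule grz3_eval_expr) simp
  then show ?thesis
    unfolding grz_unary_def
  proof (rule grz_cong)
    fix xs :: "nat list" assume "length xs = 1"
    then obtain n where "xs = [n]" by (auto simp: length_Suc_conv)
    then show "diag_num (xs ! 0) = eval_expr ?e xs" using eval_eq by simp
  qed
qed

definition diag_real :: real where
  "diag_real = (\<Sum>i. real (diag_digit i (diag_num i)) / 4 ^ (i + 1))"

lemma diag_real_bounds:
  "real (diag_num n) / 4 ^ n \<le> diag_real \<and> diag_real \<le> real (diag_num n) / 4 ^ n + (2/3) / 4 ^ n"
proof -
  define a where "a i = real (diag_digit i (diag_num i)) / 4 ^ (i + 1)" for i
  have a_nonneg: "0 \<le> a i" for i unfolding a_def by simp
  have a_le: "a i \<le> (1/2) * (1/4) ^ i" for i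
  proof -
    have "a i \<le> 2 / 4 ^ (i + 1)"
      unfolding a_def using diag_digit_le[of i "diag_num i"] by (intro divide_right_mono) auto
    then show ?thesis by (simp add: power_divide field_simps)
  qed
  have geom: "summable (\<lambda>i. c * (1/4::real) ^ i)" for c
    by (intro summable_mult summable_geometric) simp
  have "summable a"
    by (rule summable_comparison_test'[OF geom[of "1/2"], of 0]) (use a_nonneg a_le in auto)
  then have split: "diag_real = (\<Sum>i. a (i + n)) + (\<Sum>i<n. a i)"
    and tail: "summable (\<lambda>i. a (i + n))"
    unfolding diag_real_def a_def[symmetric]
    by (rule suminf_split_initial_segment, rule summable_ignore_initial_segment)
  have partial: "(\<Sum>i<n. a i) = real (diag_num n) / 4 ^ n"
    by (induction n) (simp_all add: a_def diag_num_Suc field_simps)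
  have "(\<Sum>i. a (i + n)) \<le> (\<Sum>i. ((1/2) * (1/4) ^ n) * (1/4::real) ^ i)"
    using a_le[of "_ + n"] by (intro suminf_le tail geom) (simp add: power_add mult_ac)
  also have "\<dots> = (2/3) / 4 ^ n"
    by (subst suminf_mult) (simp_all add: suminf_geometric power_divide)
  finally show ?thesis
    using split partial suminf_nonneg[OF tail a_nonneg] by simp
qed

lemma diag_real_grz3: "diag_real \<in> grz_reals 3"
  unfolding grz_reals_def grz_computable_def
proof (intro CollectI exI conjI allI)
  show "grz_unary 3 diag_num" by (rule grz3_diag_num)
  show "grz_unary 3 (\<lambda>x. 0)" unfolding grz_unary_def by (rule grz.zero)
  have "(1, eval_expr (EDiff (EPow (ENum 4) (EVar 0)) (ENum 1))) \<in> grz 3"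
    by (rule grz3_eval_expr) simp
  then show "grz_unary 3 (\<lambda>x. 4 ^ x - 1)"
    unfolding grz_unary_def by (rule grz_cong) (simp add: nth_default_def)
  fix x :: nat
  have "real x + 1 \<le> 4 ^ x"
    by (induction x) (auto simp: add_mono)
  then have "(2/3) / (4::real) ^ x \<le> 1 / (real x + 1)"
    by (simp add: field_simps)
  moreover have "real (4 ^ x - 1 :: nat) + 1 = 4 ^ x"
    by (simp add: of_nat_diff)
  ultimately show "\<bar>(real (diag_num x) - real 0) / (real (4 ^ x - 1) + 1) - diag_real\<bar> \<le> 1 / (real x + 1)"
    using diag_real_bounds[of x] by (simp add: abs_le_iff)
qed

lemma diag_test_iff:
  fixes F G H S i :: nat
  shows "3 * 4 ^ i * F < (3 * S + 1) * Suc H + 3 * 4 ^ i * G \<longleftrightarrow>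
         (real F - real G) / (real H + 1) < real S / 4 ^ i + 1 / (3 * 4 ^ i)"
proof -
  have "3 * 4 ^ i * F < (3 * S + 1) * Suc H + 3 * 4 ^ i * G \<longleftrightarrow>
      real (3 * 4 ^ i * F) < real ((3 * S + 1) * Suc H + 3 * 4 ^ i * G)"
    by (simp only: of_nat_less_iff)
  also have "\<dots> \<longleftrightarrow> (real F - real G) * (3 * 4 ^ i) < (3 * real S + 1) * (real H + 1)"
    by (simp add: algebra_simps)
  also have "\<dots> \<longleftrightarrow> (real F - real G) / (real H + 1) < (3 * real S + 1) / (3 * 4 ^ i)"
    by (simp add: field_simps)
  also have "(3 * real S + 1) / (3 * 4 ^ i) = real S / 4 ^ i + 1 / (3 * 4 ^ i)"
    by (simp add: field_simps)
  finally show ?thesis .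
qed

text \<open>Choosing the digit \<open>2\<close> or \<open>0\<close> keeps every real with these first \<open>i + 1\<close> digits at distance
  more than \<open>1 / (6 * 4 ^ i)\<close> from \<open>a\<close>.\<close>

lemma diag_digit_separates:
  fixes S i d :: nat and a \<alpha> :: real
  assumes d: "d = (if a < real S / 4 ^ i + 1 / (3 * 4 ^ i) then 2 else 0)"
    and lo: "real S / 4 ^ i + real d / 4 ^ (i + 1) \<le> \<alpha>"
    and hi: "\<alpha> \<le> real S / 4 ^ i + real d / 4 ^ (i + 1) + (2/3) / 4 ^ (i + 1)"
  shows "1 / (16 * 4 ^ i + 1) < \<bar>a - \<alpha>\<bar>"
proof -
  define E :: real where "E = 4 ^ i"
  have E: "0 < E" unfolding E_def by simp
  have "1 / (16 * E + 1) < 1 / (6 * E)" using E by (simp add: field_simps)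
  moreover have "1 / (6 * E) \<le> \<bar>a - \<alpha>\<bar>"
  proof (cases "a < real S / E + 1 / (3 * E)")
    case True
    then have "real S / E + 1 / (2 * E) \<le> \<alpha>" using lo d unfolding E_def by simp
    moreover have "1 / (6 * E) = 1 / (2 * E) - 1 / (3 * E)" using E by (simp add: field_simps)
    ultimately have "1 / (6 * E) \<le> \<alpha> - a" using True by linarith
    then show ?thesis by linarith
  next
    case False
    then have "\<alpha> \<le> real S / E + 1 / (6 * E)" using hi d unfolding E_def by simp
    moreover have "1 / (6 * E) = 1 / (3 * E) - 1 / (6 * E)" using E by (simp add: field_simps)
    ultimately have "1 / (6 * E) \<le> a - \<alpha>" using False by linarith
    then show ?thesis by linarith
  qed
  ultimately show ?thesis unfolding E_def by simp
qed

lemma table_digit_represented: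
  fixes x :: nat
  assumes t: "represents 1 (\<lambda>xs. F (xs ! 0)) t c" "arities_le K 1 t" "gcode t < i"
    and q: "c \<le> q" "K \<le> q" "1 \<le> q"
  defines "D \<equiv> (x + 2) ^ q"
  shows "digit (Suc D) (table D (Suc D ^ q) i i) (gcode t * Suc D ^ q + x) = F x"
proof -
  have "x + 2 \<le> D" unfolding D_def using power_increasing[OF q(3), of "x + 2"] by simp
  then have "digit (Suc D) (table D (Suc D ^ q) i i) (gcode t * Suc D ^ q + from_digits (Suc D) [x])
      = ceval D t [x]"
    using depth_le_gcode[of t] t arities_le_mono[OF t(2) q(2)]
    by (intro tabulatesD[OF tabulates_table]) auto
  moreover have "ceval D t [x] = F x"
    using representsD(3)[OF t(1), of "[x]" D] power_increasing[OF q(1), of "x + 2"]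
    unfolding D_def by simp
  ultimately show ?thesis by simp
qed

lemma diag_digit_represented:
  fixes x :: nat
  assumes f: "represents 1 (\<lambda>xs. f (xs ! 0)) tf cf" "arities_le Kf 1 tf"
    and g: "represents 1 (\<lambda>xs. g (xs ! 0)) tg cg" "arities_le Kg 1 tg"
    and h: "represents 1 (\<lambda>xs. h (xs ! 0)) th ch" "arities_le Kh 1 th"
    and q: "cf + cg + ch + Kf + Kg + Kh < q"
    and i: "i = pair (pair (gcode tf) (pair (gcode tg) (gcode th))) q"
    and x: "x = 4 ^ (i + 2)"
  shows "diag_digit i s = (if (real (f x) - real (g x)) / (real (h x) + 1) < real s / 4 ^ i + 1 / (3 * 4 ^ i)
           then 2 else 0)"
proof -
  have "pair (gcode tf) (pair (gcode tg) (gcode th)) < i" unfolding i by (rule fst_less_pair)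
  then have codes: "gcode tf < i" "gcode tg < i" "gcode th < i"
    using fst_less_pair[of "gcode tf" "pair (gcode tg) (gcode th)"] fst_less_pair[of "gcode tg" "gcode th"]
      snd_less_pair[of "gcode th" "gcode tg"] snd_less_pair[of "pair (gcode tg) (gcode th)" "gcode tf"]
    by linarith+
  let ?D = "(x + 2) ^ q"
  let ?entry = "\<lambda>c. digit (Suc ?D) (table ?D (Suc ?D ^ q) i i) (c * Suc ?D ^ q + x)"
  have entries: "?entry (gcode tf) = f x" "?entry (gcode tg) = g x" "?entry (gcode th) = h x"
    by (rule table_digit_represented[OF f codes(1)] table_digit_represented[OF g codes(2)]
        table_digit_represented[OF h codes(3)]; use q in simp)+
  have "pair_snd i = q" "pair_fst (pair_fst i) = gcode tf"
    "pair_fst (pair_snd (pair_fst i)) = gcode tg" "pair_snd (pair_snd (pair_fst i)) = gcode th"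
    unfolding i by simp_all
  then have "diag_digit i s = (if 3 * 4 ^ i * f x < (3 * s + 1) * Suc (h x) + 3 * 4 ^ i * g x then 2 else 0)"
    using diag_digit_eq[of i s] unfolding x[symmetric] by (simp only: entries)
  then show ?thesis unfolding diag_test_iff .
qed

lemma diag_real_not_grz2: "diag_real \<notin> grz_reals 2"
proof
  assume "diag_real \<in> grz_reals 2"
  then obtain f g h where "representable 1 (\<lambda>xs. f (xs ! 0))" "representable 1 (\<lambda>xs. g (xs ! 0))"
    "representable 1 (\<lambda>xs. h (xs ! 0))" and approx: "\<forall>x. \<bar>(real (f x) - real (g x)) / (real (h x) + 1) - diag_real\<bar> \<le> 1 / (real x + 1)"
    unfolding grz_reals_def grz_computable_def grz_unary_def by (blast intro: grz2_representable)
  then obtain tf cf Kf tg cg Kg th ch Kh where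
    f: "represents 1 (\<lambda>xs. f (xs ! 0)) tf cf" "arities_le Kf 1 tf" and
    g: "represents 1 (\<lambda>xs. g (xs ! 0)) tg cg" "arities_le Kg 1 tg" and
    h: "represents 1 (\<lambda>xs. h (xs ! 0)) th ch" "arities_le Kh 1 th"
    unfolding representable_def by blast
  define i where "i = pair (pair (gcode tf) (pair (gcode tg) (gcode th))) (cf + cg + ch + Kf + Kg + Kh + 1)"
  define x :: nat where "x = 4 ^ (i + 2)"
  let ?a = "(real (f x) - real (g x)) / (real (h x) + 1)"
  have digit: "diag_digit i (diag_num i) = (if ?a < real (diag_num i) / 4 ^ i + 1 / (3 * 4 ^ i) then 2 else 0)"
    by (rule diag_digit_represented[OF f g h _ i_def x_def]) simp
  have "real (diag_num (Suc i)) / 4 ^ Suc i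
      = real (diag_num i) / 4 ^ i + real (diag_digit i (diag_num i)) / 4 ^ (i + 1)"
    by (simp add: diag_num_Suc field_simps)
  then have "1 / (16 * 4 ^ i + 1) < \<bar>?a - diag_real\<bar>"
    using diag_real_bounds[of "Suc i"] by (intro diag_digit_separates[OF digit]) simp_all
  moreover have "\<bar>?a - diag_real\<bar> \<le> 1 / (16 * 4 ^ i + 1)"
    using approx[rule_format, of x] by (simp add: x_def power_add)
  ultimately show False by simp
qed

theorem mainTheorem16:
  shows "grz_reals 2 \<subset> grz_reals 3"
proof -
  have "grz_reals 2 \<subseteq> grz_reals 3"
    unfolding grz_reals_def grz_computable_def grz_unary_def using grz2_subset_grz3 by blast
  then show ?thesis using diag_real_grz3 diag_real_not_grz2 by blast
qed

end
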